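(* Let $n\ge1$ and $1\le k\le n$. Let $\alpha_k$ be the number of pairs $(P,i)$ where $P=(a_0,a_1,\dots,a_{2n})$ is a Dyck path of length $2n$ (i.e., $a_0=a_{2n}=0$, $a_j\ge0$ and $|a_j-a_{j-1}|=1$ for all $j$) and $0\le i\le 2n-1$ is an index with $a_i=k$ and $a_{i+1}=k-1$. Then \[ \alpha_k=\binom{2n}{n-k}-\binom{2n}{n-k-1}, \] with the convention $\binom{2n}{-1}=0$. *)

theory Defs
  imports Main
begin

definition dyck_path :: "nat \<Rightarrow> int list \<Rightarrow> bool" where
  "dyck_path n P \<longleftrightarrow> length P = 2*n + 1 \<and> P ! 0 = 0 \<and> P ! (2*n) = 0
     \<and> (\<forall>j \<le> 2*n. P ! j \<ge> 0)
     \<and> (\<forall>j. 1 \<le> j \<and> j \<le> 2*n \<longrightarrow> \<bar>P ! j - P ! (j-1)\<bar> = 1)"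

definition alpha :: "nat \<Rightarrow> nat \<Rightarrow> nat" where
  "alpha n k = card {(P, i). dyck_path n P \<and> i \<le> 2*n - 1
                         \<and> P ! i = int k \<and> P ! (i+1) = int k - 1}"

definition binom_int :: "nat \<Rightarrow> int \<Rightarrow> int" where
  "binom_int m j = (if j < 0 then 0 else int (m choose nat j))"

end

theory Submission
  imports Defs
begin

text \<open>
  Count walks by removing their last step. Writing \<open>N(m, b)\<close> for the number of walks of
  length \<open>m\<close> from \<open>0\<close> to \<open>b\<close> that stay nonnegative, and \<open>D(m, b, K)\<close> for the number of such
  walks together with a step from \<open>K\<close> down to \<open>K - 1\<close>, one gets
  \<open>N(m + 1, b) = N(m, b - 1) + N(m, b + 1)\<close> and
  \<open>D(m + 1, b, K) = D(m, b - 1, K) + D(m, b + 1, K) + [b = K - 1] N(m, K)\<close>,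
  the last term counting the walks whose final step is the descent. The claimed closed forms
  obey the same recursions by Pascal's rule; at the boundary \<open>b = 0\<close> the missing term
  vanishes because the two middle binomial coefficients of an odd row agree. Finally
  \<open>\<alpha>\<^sub>k = D(2n, 0, k)\<close>.
\<close>


definition nonneg_walks :: "nat \<Rightarrow> int \<Rightarrow> int list set" where
  "nonneg_walks m b = {P. length P = m + 1 \<and> P ! 0 = 0 \<and> P ! m = b \<and> (\<forall>j \<le> m. P ! j \<ge> 0)
     \<and> (\<forall>j. 1 \<le> j \<and> j \<le> m \<longrightarrow> \<bar>P ! j - P ! (j - 1)\<bar> = 1)}"

lemma dyck_path_iff_nonneg_walks: "dyck_path n P \<longleftrightarrow> P \<in> nonneg_walks (2 * n) 0"
  by (auto simp: dyck_path_def nonneg_walks_def)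

lemma nonneg_walks_length: "P \<in> nonneg_walks m b \<Longrightarrow> length P = m + 1"
  by (simp add: nonneg_walks_def)

lemma nonneg_walks_endpoint: "P \<in> nonneg_walks m b \<Longrightarrow> P ! m = b"
  by (simp add: nonneg_walks_def)

lemma snoc_in_nonneg_walks_iff:
  assumes "length Q = m + 1"
  shows "Q @ [b] \<in> nonneg_walks (Suc m) b \<longleftrightarrow>
           b \<ge> 0 \<and> Q \<in> nonneg_walks m (b - 1) \<union> nonneg_walks m (b + 1)"
proof -
  have left: "(Q @ [b]) ! j = Q ! j" if "j \<le> m" for j
    using assms that by (simp add: nth_append_left)
  have last: "(Q @ [b]) ! Suc m = b"
    using assms by (simp add: nth_append_right)
  have nonneg: "(\<forall>j \<le> Suc m. (Q @ [b]) ! j \<ge> 0) \<longleftrightarrow> (\<forall>j \<le> m. Q ! j \<ge> 0) \<and> b \<ge> 0"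
    using left last by (auto simp: le_Suc_eq)
  have steps: "(\<forall>j. 1 \<le> j \<and> j \<le> Suc m \<longrightarrow> \<bar>(Q @ [b]) ! j - (Q @ [b]) ! (j - 1)\<bar> = 1) \<longleftrightarrow>
      (\<forall>j. 1 \<le> j \<and> j \<le> m \<longrightarrow> \<bar>Q ! j - Q ! (j - 1)\<bar> = 1) \<and> \<bar>b - Q ! m\<bar> = 1"
    using left last by (auto simp: le_Suc_eq)
  show ?thesis
    unfolding nonneg_walks_def using assms nonneg steps left last by auto
qed

lemma nonneg_walks_Suc:
  assumes "b \<ge> 0"
  shows "nonneg_walks (Suc m) b = (\<lambda>Q. Q @ [b]) ` (nonneg_walks m (b - 1) \<union> nonneg_walks m (b + 1))"
proof
  show "nonneg_walks (Suc m) b \<subseteq> (\<lambda>Q. Q @ [b]) ` (nonneg_walks m (b - 1) \<union> nonneg_walks m (b + 1))"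
  proof
    fix P assume P: "P \<in> nonneg_walks (Suc m) b"
    then have len: "length P = Suc m + 1" and "P ! Suc m = b"
      by (auto simp: nonneg_walks_def)
    then have "P = butlast P @ [b]"
      by (metis append_butlast_last_id last_conv_nth list.size(3) diff_Suc_1 add_is_0 Suc_eq_plus1 nat.distinct(1))
    with P len show "P \<in> (\<lambda>Q. Q @ [b]) ` (nonneg_walks m (b - 1) \<union> nonneg_walks m (b + 1))"
      using snoc_in_nonneg_walks_iff[of "butlast P" m b] by auto
  qed
qed (use assms snoc_in_nonneg_walks_iff nonneg_walks_length in auto)

lemma nonneg_walks_negative: "b < 0 \<Longrightarrow> nonneg_walks m b = {}"
  by (auto simp: nonneg_walks_def)

lemma nonneg_walks_0: "nonneg_walks 0 b = (if b = 0 then {[0]} else {})"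
  by (auto simp: nonneg_walks_def length_Suc_conv)

lemma finite_nonneg_walks: "finite (nonneg_walks m b)"
proof (induction m arbitrary: b)
  case 0
  then show ?case
    by (simp add: nonneg_walks_0)
next
  case (Suc m)
  then show ?case
    by (cases "b < 0") (simp_all add: nonneg_walks_negative nonneg_walks_Suc)
qed

lemma card_nonneg_walks_Suc:
  assumes "b \<ge> 0"
  shows "card (nonneg_walks (Suc m) b) = card (nonneg_walks m (b - 1)) + card (nonneg_walks m (b + 1))"
proof -
  have "inj_on (\<lambda>Q. Q @ [b]) (nonneg_walks m (b - 1) \<union> nonneg_walks m (b + 1))"
    by (simp add: inj_on_def)
  moreover have "nonneg_walks m (b - 1) \<inter> nonneg_walks m (b + 1) = {}"
    by (auto simp: nonneg_walks_def)
  ultimately show ?thesis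
    by (simp add: nonneg_walks_Suc[OF assms] card_image card_Un_disjoint finite_nonneg_walks)
qed

definition descents :: "nat \<Rightarrow> int \<Rightarrow> int \<Rightarrow> (int list \<times> nat) set" where
  "descents m b K = {(P, i). P \<in> nonneg_walks m b \<and> i < m \<and> P ! i = K \<and> P ! (i + 1) = K - 1}"

lemma descents_Suc:
  assumes "b \<ge> 0"
  shows "descents (Suc m) b K =
           (\<lambda>(Q, i). (Q @ [b], i)) ` (descents m (b - 1) K \<union> descents m (b + 1) K)
           \<union> (if b = K - 1 then (\<lambda>Q. (Q @ [b], m)) ` nonneg_walks m K else {})"
    (is "_ = ?old \<union> ?new")
proof (intro set_eqI iffI)
  fix x assume "x \<in> descents (Suc m) b K"
  then obtain Q i where x: "x = (Q @ [b], i)" and Q: "Q \<in> nonneg_walks m (b - 1) \<union> nonneg_walks m (b + 1)"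
    and i: "i < Suc m" and down: "(Q @ [b]) ! i = K" "(Q @ [b]) ! (i + 1) = K - 1"
    unfolding descents_def nonneg_walks_Suc[OF assms] by auto
  have len: "length Q = m + 1"
    using Q nonneg_walks_length by blast
  show "x \<in> ?old \<union> ?new"
  proof (cases "i < m")
    case True
    with len down have "Q ! i = K" "Q ! (i + 1) = K - 1"
      by (simp_all add: nth_append_left)
    with Q True have "(Q, i) \<in> descents m (b - 1) K \<union> descents m (b + 1) K"
      unfolding descents_def by auto
    then show ?thesis
      using x by auto
  next
    case False
    with i have "i = m"
      by simp
    with len down have "Q ! m = K" "b = K - 1"
      by (simp_all add: nth_append)
    with Q have "Q \<in> nonneg_walks m K"
      unfolding nonneg_walks_def by auto
    then show ?thesis
      using x \<open>i = m\<close> \<open>b = K - 1\<close> by auto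
  qed
next
  fix x assume "x \<in> ?old \<union> ?new"
  then consider
      (old) Q i where "x = (Q @ [b], i)" "(Q, i) \<in> descents m (b - 1) K \<union> descents m (b + 1) K"
    | (new) Q where "x = (Q @ [b], m)" "b = K - 1" "Q \<in> nonneg_walks m K"
    by (auto split: if_splits)
  then show "x \<in> descents (Suc m) b K"
  proof cases
    case old
    then have "length Q = m + 1"
      by (auto simp: descents_def dest: nonneg_walks_length)
    with old assms show ?thesis
      by (auto simp: descents_def nonneg_walks_Suc nth_append_left)
  next
    case new
    then have "length Q = m + 1" "Q ! m = K"
      by (simp_all add: nonneg_walks_length nonneg_walks_endpoint)
    with new assms show ?thesis
      by (auto simp: descents_def nonneg_walks_Suc nth_append)
  qed
qed

lemma finite_descents: "finite (descents m b K)"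
proof (rule finite_subset)
  show "descents m b K \<subseteq> nonneg_walks m b \<times> {..<m}"
    by (auto simp: descents_def)
qed (simp add: finite_nonneg_walks)

lemma card_descents_Suc:
  assumes "b \<ge> 0"
  shows "card (descents (Suc m) b K) = card (descents m (b - 1) K) + card (descents m (b + 1) K)
           + (if b = K - 1 then card (nonneg_walks m K) else 0)"
proof -
  let ?old = "descents m (b - 1) K \<union> descents m (b + 1) K"
  have "inj_on (\<lambda>(Q, i). (Q @ [b], i)) ?old"
    by (auto simp: inj_on_def)
  moreover have "descents m (b - 1) K \<inter> descents m (b + 1) K = {}"
    by (auto simp: descents_def nonneg_walks_def)
  ultimately have card_old: "card ((\<lambda>(Q, i). (Q @ [b], i)) ` ?old)
      = card (descents m (b - 1) K) + card (descents m (b + 1) K)"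
    by (simp add: card_image card_Un_disjoint finite_descents)
  have "inj_on (\<lambda>Q. (Q @ [b], m)) (nonneg_walks m K)"
    by (simp add: inj_on_def)
  then have card_new: "card ((\<lambda>Q. (Q @ [b], m)) ` nonneg_walks m K) = card (nonneg_walks m K)"
    by (rule card_image)
  have "(\<lambda>(Q, i). (Q @ [b], i)) ` ?old \<inter> (\<lambda>Q. (Q @ [b], m)) ` nonneg_walks m K = {}"
    by (auto simp: descents_def)
  then have "card ((\<lambda>(Q, i). (Q @ [b], i)) ` ?old \<union> (\<lambda>Q. (Q @ [b], m)) ` nonneg_walks m K)
      = card ((\<lambda>(Q, i). (Q @ [b], i)) ` ?old) + card ((\<lambda>Q. (Q @ [b], m)) ` nonneg_walks m K)"
    by (simp add: card_Un_disjoint finite_descents finite_nonneg_walks)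
  with card_old card_new show ?thesis
    unfolding descents_Suc[OF assms] by (cases "b = K - 1") simp_all
qed

text \<open>The shifted index \<open>i\<close> lets the rule be instantiated with \<open>j - 1\<close> in any arithmetic form.\<close>

lemma binom_int_Suc:
  assumes "i = j - 1"
  shows "binom_int (Suc m) j = binom_int m j + binom_int m i"
proof (cases "j \<le> 0")
  case True
  with assms show ?thesis
    by (cases "j = 0") (simp_all add: binom_int_def)
next
  case False
  then have "nat j = Suc (nat (j - 1))"
    by simp
  with False assms show ?thesis
    by (simp add: binom_int_def)
qed

lemma binom_int_middle:
  assumes "int m = 2 * d - 1"
  shows "binom_int m d = binom_int m (d - 1)"
proof -
  have "m choose nat d = m choose (m - nat d)"
    using assms by (intro binomial_symmetric) linarith
  moreover have "m - nat d = nat (d - 1)"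
    using assms by linarith
  ultimately show ?thesis
    using assms by (simp add: binom_int_def)
qed

text \<open>
  A walk of length \<open>m\<close> with \<open>d\<close> down-steps ends at height \<open>m - 2d\<close>; the following are the
  closed forms of \<open>N\<close> and \<open>D\<close> in terms of \<open>d\<close>.
\<close>

definition ballot_number :: "nat \<Rightarrow> int \<Rightarrow> int" where
  "ballot_number m d = binom_int m d - binom_int m (d - 1)"

definition descent_number :: "nat \<Rightarrow> int \<Rightarrow> int \<Rightarrow> int" where
  "descent_number m d K = binom_int m (min (int m - d - K) (d - 1)) - binom_int m (d - K - 1)"

lemma ballot_number_Suc: "ballot_number (Suc m) d = ballot_number m d + ballot_number m (d - 1)"
  using binom_int_Suc[of "d - 1" d m] binom_int_Suc[of "d - 2" "d - 1" m]
  by (simp add: ballot_number_def)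

lemma descent_number_eqI:
  assumes "min (int m - d - K) (d - 1) = x" and "d - K - 1 = y"
  shows "descent_number m d K = binom_int m x - binom_int m y"
  using assms by (simp add: descent_number_def)

lemma descent_number_Suc:
  assumes "int (Suc m) = b + 2 * d" and "b \<ge> 0"
  shows "descent_number (Suc m) d K
           = descent_number m d K + descent_number m (d - 1) K + (if b = K - 1 then ballot_number m (d - 1) else 0)"
proof -
  have low: "binom_int (Suc m) (d - K - 1) = binom_int m (d - K - 1) + binom_int m (d - K - 2)"
    by (rule binom_int_Suc) simp
  have mid: "binom_int (Suc m) (d - 1) = binom_int m (d - 1) + binom_int m (d - 2)"
    by (rule binom_int_Suc) simp
  consider "b \<le> K - 2" | "b = K - 1" | "b \<ge> K"
    by linarith
  then show ?thesis
  proof cases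
    case 1
    have "descent_number (Suc m) d K = binom_int (Suc m) (b + d - K) - binom_int (Suc m) (d - K - 1)"
      "descent_number m d K = binom_int m (b + d - K - 1) - binom_int m (d - K - 1)"
      "descent_number m (d - 1) K = binom_int m (b + d - K) - binom_int m (d - K - 2)"
      by (rule descent_number_eqI; use assms 1 in simp)+
    moreover have "binom_int (Suc m) (b + d - K) = binom_int m (b + d - K) + binom_int m (b + d - K - 1)"
      by (rule binom_int_Suc) simp
    ultimately show ?thesis
      using 1 low by simp
  next
    case 2
    have "descent_number (Suc m) d K = binom_int (Suc m) (d - 1) - binom_int (Suc m) (d - K - 1)"
      "descent_number m d K = binom_int m (d - 2) - binom_int m (d - K - 1)"
      "descent_number m (d - 1) K = binom_int m (d - 2) - binom_int m (d - K - 2)"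
      by (rule descent_number_eqI; use assms 2 in simp)+
    with 2 low mid show ?thesis
      by (simp add: ballot_number_def)
  next
    case 3
    have "descent_number (Suc m) d K = binom_int (Suc m) (d - 1) - binom_int (Suc m) (d - K - 1)"
      "descent_number m d K = binom_int m (d - 1) - binom_int m (d - K - 1)"
      "descent_number m (d - 1) K = binom_int m (d - 2) - binom_int m (d - K - 2)"
      by (rule descent_number_eqI; use assms 3 in simp)+
    with 3 low mid show ?thesis
      by simp
  qed
qed

lemma card_nonneg_walks:
  assumes "int m = b + 2 * d" and "b \<ge> 0"
  shows "int (card (nonneg_walks m b)) = ballot_number m d"
  using assms
proof (induction m arbitrary: b d)
  case 0
  then show ?case
    by (simp add: nonneg_walks_0 ballot_number_def binom_int_def)
next
  case (Suc m)
  have "int (card (nonneg_walks m (b - 1))) = ballot_number m d"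
  proof (cases "b = 0")
    case True
    then show ?thesis
      using Suc.prems binom_int_middle[of m d]
      by (simp add: nonneg_walks_negative ballot_number_def)
  next
    case False
    with Suc show ?thesis
      by simp
  qed
  moreover have "int (card (nonneg_walks m (b + 1))) = ballot_number m (d - 1)"
    using Suc by simp
  ultimately show ?case
    using Suc.prems by (simp add: card_nonneg_walks_Suc ballot_number_Suc)
qed

lemma card_descents:
  assumes "K \<ge> 1" and "int m = b + 2 * d" and "b \<ge> 0"
  shows "int (card (descents m b K)) = descent_number m d K"
  using assms(2,3)
proof (induction m arbitrary: b d)
  case 0
  then show ?case
    using assms(1) by (simp add: descents_def descent_number_def binom_int_def)
next
  case (Suc m)
  have "int (card (descents m (b - 1) K)) = descent_number m d K"
  proof (cases "b = 0")
    case True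
    then show ?thesis
      using Suc.prems assms(1)
      by (simp add: descents_def nonneg_walks_negative descent_number_eqI[where x = "d - K - 1"])
  next
    case False
    with Suc show ?thesis
      by simp
  qed
  moreover have "int (card (descents m (b + 1) K)) = descent_number m (d - 1) K"
    using Suc by simp
  moreover have "int (card (nonneg_walks m K)) = ballot_number m (d - 1)" if "b = K - 1"
    using that Suc.prems assms(1) by (intro card_nonneg_walks) simp_all
  ultimately show ?case
    using Suc.prems assms(1) by (simp add: card_descents_Suc descent_number_Suc)
qed

theorem mainTheorem12:
  fixes n k :: nat
  assumes "n \<ge> 1" and "1 \<le> k" and "k \<le> n"
  shows "int (alpha n k) = binom_int (2*n) (int n - int k) - binom_int (2*n) (int n - int k - 1)"
proof -
  have "{(P, i). dyck_path n P \<and> i \<le> 2*n - 1 \<and> P ! i = int k \<and> P ! (i+1) = int k - 1}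
      = descents (2 * n) 0 (int k)"
    using assms(1) by (auto simp: descents_def dyck_path_iff_nonneg_walks)
  then have "int (alpha n k) = descent_number (2 * n) (int n) (int k)"
    using assms by (simp add: alpha_def card_descents)
  also have "\<dots> = binom_int (2*n) (int n - int k) - binom_int (2*n) (int n - int k - 1)"
    using assms by (simp add: descent_number_def min_def algebra_simps)
  finally show ?thesis .
qed

end
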